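(* For complex $a,c$ with $|a|<1$ and $|c|<1$, \begin{align*} \sum_{n=0}^\infty \frac{(q/c; q)_n c^n}{\bigl(q^2; q^2\bigr)_n (1+aq^n)} q^{n(n+1)/2} =\frac{(qa, qc, -ac; q)_\infty}{(q, ac, -a; q)_{\infty}}\sum_{n=0}^\infty \sum_{j=-n}^n (-1)^j \bigl(1-q^{2n+1}\bigr) q^{n^2-j^2}\frac{(q/a, q/c; q)_n (ac)^n}{(qa, qc; q)_n}. \end{align*}
   Context: Throughout, $q$ is a complex number with $0<|q|<1$. For $x\in\mathbb{C}$ and base $p\in\{q,q^2\}$, $(x;p)_\infty=\prod_{k=0}^\infty(1-xp^k)$ and, for an integer $n\ge 0$, $(x;p)_n=\prod_{k=0}^{n-1}(1-xp^k)$; also $(x_1,\dots,x_m;p)_n=(x_1;p)_n\cdots(x_m;p)_n$ for $n$ an integer or $\infty$. *)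

theory Defs
  imports "HOL-Analysis.Analysis"
begin

definition qpoch :: "complex \<Rightarrow> complex \<Rightarrow> nat \<Rightarrow> complex" where
  "qpoch x p n = (\<Prod>k<n. 1 - x * p ^ k)"

definition qpoch_inf :: "complex \<Rightarrow> complex \<Rightarrow> complex" where
  "qpoch_inf x p = (\<Prod>k. 1 - x * p ^ k)"

end

theory Submission
  imports Defs "HOL-Computational_Algebra.Formal_Power_Series" "HOL-Real_Asymp.Real_Asymp"
begin

(*
  Write L(c) for the left-hand side and S(c) = sum_n (q/a, q/c; q)_n (-ac)^n / (q^2; q^2)_n.
  Termwise, (1 - c) L(c) - (1 + ac) L(qc) and (1 - c) S(c) - S(qc) are multiples of the terms of
  q-Gauss series, and summing them shows that D(c) = (-a; q)_oo L(c) - (-ac; q)_oo S(c) satisfies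
  (1 - c) D(c) = (1 + ac) D(qc).  Iterating gives D(c) (c; q)_oo = (-ac; q)_oo D(0), and D(q) = 0
  because both series reduce to their first term at c = q; hence D = 0.

  Next, alpha_r = (1 - q^(2r+1)) sum_{|j| <= r} (-1)^j q^(r^2 - j^2) and
  beta_n = (-1)^n / (q^2; q^2)_n satisfy the Bailey pair relation
  beta_n = sum_{r <= n} alpha_r / ((q; q)_(n-r) (q; q)_(n+r+1)).  For fixed j the sum over r
  telescopes, and the remaining symmetric sum over j is a coefficient of
  e_q(z) e_q(-z) = sum_n z^(2n) / (q^2; q^2)_n.  Substituting beta_n into S(c) and interchanging the
  absolutely convergent double sum, every inner sum is again a q-Gauss sum, which yields the
  right-hand side.
*)

lemma qpoch_0 [simp]: "qpoch x p 0 = 1"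
  by (simp add: qpoch_def)

lemma qpoch_Suc: "qpoch x p (Suc n) = qpoch x p n * (1 - x * p ^ n)"
  by (simp add: qpoch_def)

lemma qpoch_add: "qpoch x p (m + n) = qpoch x p m * qpoch (x * p ^ m) p n"
  by (induction n) (simp_all add: qpoch_Suc power_add mult_ac)

lemma qpoch_nonzero:
  assumes "norm x < 1" "norm p \<le> 1"
  shows "qpoch x p n \<noteq> 0"
proof -
  have "norm (x * p ^ k) \<le> norm x" for k
    using assms by (simp add: norm_mult norm_power mult_left_le power_le_one)
  then have "norm (x * p ^ k) < 1" for k
    using assms(1) by (rule le_less_trans)
  then have "1 - x * p ^ k \<noteq> 0" for k
    by (metis eq_iff_diff_eq_0 norm_one less_irrefl)
  then show ?thesis
    by (simp add: qpoch_def)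
qed

lemma qpoch_inf_0 [simp]: "qpoch_inf 0 p = 1"
  by (simp add: qpoch_inf_def)

lemma summable_prod_lessThan:
  fixes \<rho> :: "nat \<Rightarrow> real"
  assumes nonneg: "\<And>k. 0 \<le> \<rho> k" and lim: "\<rho> \<longlonglongrightarrow> l" and "l < 1"
  shows "summable (\<lambda>n. \<Prod>k<n. \<rho> k)"
proof -
  define c where "c = (1 + l) / 2"
  have "c < 1" "l < c"
    using \<open>l < 1\<close> by (auto simp: c_def)
  then obtain N where N: "\<And>k. k \<ge> N \<Longrightarrow> \<rho> k < c"
    using lim order_tendstoD(2) by (metis eventually_at_top_linorder)
  show ?thesis
  proof (rule summable_ratio_test[of c N])
    fix n assume "N \<le> n"
    then have "\<rho> n * (\<Prod>k<n. \<rho> k) \<le> c * (\<Prod>k<n. \<rho> k)"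
      using N by (intro mult_right_mono prod_nonneg) (auto simp: nonneg less_imp_le)
    then show "norm (\<Prod>k<Suc n. \<rho> k) \<le> c * norm (\<Prod>k<n. \<rho> k)"
      by (simp add: nonneg prod_nonneg abs_prod mult.commute)
  qed fact
qed

lemma summable_poly_times_prod_lessThan:
  fixes \<rho> :: "nat \<Rightarrow> real"
  assumes nonneg: "\<And>k. 0 \<le> \<rho> k" and lim: "\<rho> \<longlonglongrightarrow> l" and "l < 1"
  shows "summable (\<lambda>n. (real n + 1) ^ d * (\<Prod>k<n. \<rho> k))"
proof -
  define \<sigma> where "\<sigma> k = ((real k + 2) / (real k + 1)) ^ d * \<rho> k" for k
  have telescope: "(\<Prod>k<n. (real k + 2) / (real k + 1)) = real n + 1" for n
    by (induction n) (simp_all add: field_simps)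
  have "(\<lambda>k. (real k + 2) / (real k + 1)) \<longlonglongrightarrow> 1"
    by real_asymp
  then have "\<sigma> \<longlonglongrightarrow> 1 ^ d * l"
    unfolding \<sigma>_def by (intro tendsto_intros lim)
  then have "summable (\<lambda>n. \<Prod>k<n. \<sigma> k)"
    using \<open>l < 1\<close> by (intro summable_prod_lessThan[of \<sigma>]) (auto simp: \<sigma>_def nonneg)
  moreover have "(\<Prod>k<n. \<sigma> k) = (real n + 1) ^ d * (\<Prod>k<n. \<rho> k)" for n
    by (simp add: \<sigma>_def prod.distrib prod_power_distrib[symmetric] telescope)
  ultimately show ?thesis
    by simp
qed

lemma summable_on_triangle:
  fixes F :: "nat \<Rightarrow> nat \<Rightarrow> 'a::banach"
  assumes "summable (\<lambda>n. \<Sum>r\<le>n. norm (F n r))"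
  shows "(\<lambda>(n, r). F n r) summable_on Sigma UNIV (\<lambda>n. {..n})"
proof -
  have "(\<lambda>n. norm (infsum (\<lambda>r. norm (F n r)) {..n})) summable_on UNIV"
    using assms by (intro norm_summable_imp_summable_on) (simp add: sum_nonneg)
  then have "(\<lambda>x. norm (case x of (n, r) \<Rightarrow> F n r)) summable_on Sigma UNIV (\<lambda>n. {..n})"
    by (intro Infinite_Sum.abs_summable_on_Sigma_iff[THEN iffD2]) auto
  then show ?thesis
    by (rule abs_summable_summable)
qed

lemma has_sum_triangle_column:
  fixes F :: "nat \<Rightarrow> nat \<Rightarrow> 'a::banach"
  assumes "summable (\<lambda>n. \<Sum>r\<le>n. norm (F n r))"
  shows "((\<lambda>n. F n r) has_sum (\<Sum>m. F (m + r) r)) {r..}"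
proof -
  have shifted: "summable (\<lambda>m. \<Sum>r'\<le>m + r. norm (F (m + r) r'))"
    using summable_iff_shift[of "\<lambda>n. \<Sum>r'\<le>n. norm (F n r')" r] assms by blast
  have entry_le: "norm (F (m + r) r) \<le> (\<Sum>r'\<le>m + r. norm (F (m + r) r'))" for m
    by (rule member_le_sum) auto
  have column: "summable (\<lambda>m. norm (F (m + r) r))"
    by (rule summable_comparison_test'[OF shifted]) (simp add: entry_le)
  have "((\<lambda>m. F (m + r) r) has_sum (\<Sum>m. F (m + r) r)) UNIV"
    by (rule norm_summable_imp_has_sum[OF column summable_sums[OF summable_norm_cancel[OF column]]])
  moreover have "bij_betw (\<lambda>m. m + r) UNIV {r..}"
    by (rule bij_betwI[where g = "\<lambda>n. n - r"]) auto
  ultimately show ?thesis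
    using has_sum_reindex_bij_betw[of "\<lambda>m. m + r" UNIV "{r..}" "\<lambda>n. F n r"] by blast
qed

lemma sums_swap_triangle:
  fixes F :: "nat \<Rightarrow> nat \<Rightarrow> 'a::banach"
  assumes abs: "summable (\<lambda>n. \<Sum>r\<le>n. norm (F n r))"
  shows "(\<lambda>r. \<Sum>m. F (m + r) r) sums (\<Sum>n. \<Sum>r\<le>n. F n r)"
proof -
  define T :: "(nat \<times> nat) set" where "T = Sigma UNIV (\<lambda>n. {..n})"
  define T' :: "(nat \<times> nat) set" where "T' = Sigma UNIV (\<lambda>r. {r..})"
  define S where "S = infsum (\<lambda>(n, r). F n r) T"
  have summ: "(\<lambda>(n, r). F n r) summable_on T"
    unfolding T_def by (rule summable_on_triangle[OF abs])
  have swap: "bij_betw prod.swap T' T"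
    unfolding T_def T'_def by (rule bij_betwI[where g = prod.swap]) auto
  have summ': "(\<lambda>(r, n). F n r) summable_on T'"
    using summable_on_reindex_bij_betw[OF swap, of "\<lambda>(n, r). F n r"] summ by (simp add: case_prod_unfold)
  have "infsum (\<lambda>n. infsum (F n) {..n}) UNIV = S"
    using summ unfolding S_def T_def by (rule infsum_Sigma'_banach)
  then have "((\<lambda>n. infsum (F n) {..n}) has_sum S) UNIV"
    using summable_on_Sigma_banach[OF summ[unfolded T_def]] has_sum_infsum by metis
  then have "(\<lambda>n. \<Sum>r\<le>n. F n r) sums S"
    by (simp add: has_sum_imp_sums)
  then have rows: "(\<Sum>n. \<Sum>r\<le>n. F n r) = S"
    by (rule sums_unique[symmetric])
  have "infsum (\<lambda>r. infsum (\<lambda>n. F n r) {r..}) UNIV = infsum (\<lambda>(r, n). F n r) T'"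
    using summ' unfolding T'_def by (rule infsum_Sigma'_banach)
  then have "infsum (\<lambda>r. infsum (\<lambda>n. F n r) {r..}) UNIV = S"
    unfolding S_def using infsum_reindex_bij_betw[OF swap, of "\<lambda>(n, r). F n r"] by (simp add: case_prod_unfold)
  then have "((\<lambda>r. infsum (\<lambda>n. F n r) {r..}) has_sum S) UNIV"
    using summable_on_Sigma_banach[OF summ'[unfolded T'_def]] has_sum_infsum by metis
  moreover have "infsum (\<lambda>n. F n r) {r..} = (\<Sum>m. F (m + r) r)" for r
    using has_sum_triangle_column[OF abs] by (rule infsumI)
  ultimately show ?thesis
    by (simp add: rows has_sum_imp_sums)
qed

locale nome =
  fixes q :: complex
  assumes nome_nonzero: "q \<noteq> 0" and norm_nome_less_1: "norm q < 1"
begin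

lemma norm_power_nome_le_1: "norm (q ^ k) \<le> 1"
  using norm_nome_less_1 by (simp add: norm_power power_le_one)

lemma norm_mult_power_nome_le: "norm (x * q ^ k) \<le> norm x"
  using norm_power_nome_le_1[of k] by (simp add: norm_mult mult_left_le)

lemma norm_nome_mult_less_1: "norm x < 1 \<Longrightarrow> norm (q * x) < 1"
  using norm_mult_power_nome_le[of x 1] by (simp add: mult.commute)

lemma norm_nome_power_Suc_less_1: "norm q ^ Suc k < 1"
  by (rule power_Suc_less_one) (use nome_nonzero norm_nome_less_1 in auto)

lemma power_Suc_nome_neq_1: "q ^ Suc k \<noteq> 1"
  using norm_nome_power_Suc_less_1[of k] by (metis norm_one norm_power less_irrefl)

lemma nome_power_tendsto_0: "(\<lambda>n. z * q ^ n) \<longlonglongrightarrow> 0"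
  using tendsto_mult[OF tendsto_const LIMSEQ_power_zero[OF norm_nome_less_1], of z] by simp

lemma qpoch_nome_nonzero: "qpoch q q n \<noteq> 0"
  using norm_nome_less_1 by (intro qpoch_nonzero) auto

lemma qpoch_nome_squared_nonzero: "qpoch (q\<^sup>2) (q\<^sup>2) n \<noteq> 0"
proof -
  have "norm (q\<^sup>2) < 1"
    using norm_nome_less_1 by (simp add: norm_power power_less_one_iff)
  then show ?thesis
    by (intro qpoch_nonzero) auto
qed

lemma qpoch_nome_mult_qpoch_minus_nome: "qpoch q q n * qpoch (- q) q n = qpoch (q\<^sup>2) (q\<^sup>2) n"
  by (induction n) (simp_all add: qpoch_Suc power2_eq_square power_mult_distrib algebra_simps)

lemma convergent_prod_qpoch: "convergent_prod (\<lambda>k. 1 - x * q ^ k)"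
proof -
  have "summable (\<lambda>k. norm x * norm q ^ k)"
    using norm_nome_less_1 by (intro summable_mult summable_geometric) auto
  then have "summable (\<lambda>k. norm ((1 - x * q ^ k) - 1))"
    by (simp add: norm_mult norm_power)
  then show ?thesis
    by (intro abs_convergent_prod_imp_convergent_prod summable_imp_abs_convergent_prod)
qed

lemma qpoch_tendsto_qpoch_inf: "(\<lambda>n. qpoch x q n) \<longlonglongrightarrow> qpoch_inf x q"
proof -
  have "(\<lambda>n. \<Prod>k\<le>n. 1 - x * q ^ k) \<longlonglongrightarrow> qpoch_inf x q"
    unfolding qpoch_inf_def by (rule convergent_prod_LIMSEQ[OF convergent_prod_qpoch])
  then have "(\<lambda>n. qpoch x q (Suc n)) \<longlonglongrightarrow> qpoch_inf x q"
    by (simp add: qpoch_def lessThan_Suc_atMost)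
  then show ?thesis
    by (rule LIMSEQ_imp_Suc)
qed

lemma qpoch_inf_nonzero:
  assumes "norm x < 1"
  shows "qpoch_inf x q \<noteq> 0"
  unfolding qpoch_inf_def
proof (rule prodinf_nonzero[OF convergent_prod_qpoch])
  fix k
  show "1 - x * q ^ k \<noteq> 0"
    using norm_mult_power_nome_le[of x k] assms by auto
qed

lemma qpoch_inf_split: "qpoch_inf x q = qpoch x q n * qpoch_inf (x * q ^ n) q"
proof -
  have "(\<lambda>m. qpoch x q (m + n)) \<longlonglongrightarrow> qpoch_inf x q"
    using LIMSEQ_ignore_initial_segment[OF qpoch_tendsto_qpoch_inf, of x n] by simp
  moreover have "(\<lambda>m. qpoch x q (m + n)) \<longlonglongrightarrow> qpoch x q n * qpoch_inf (x * q ^ n) q"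
    unfolding add.commute[of _ n] qpoch_add by (intro tendsto_intros qpoch_tendsto_qpoch_inf)
  ultimately show ?thesis
    by (rule LIMSEQ_unique)
qed

lemma qpoch_inf_unfold: "qpoch_inf x q = (1 - x) * qpoch_inf (x * q) q"
  using qpoch_inf_split[of x 1] by (simp add: qpoch_def)

lemma qpoch_inf_tail_tendsto_1:
  assumes "qpoch_inf x q \<noteq> 0"
  shows "(\<lambda>n. qpoch_inf (x * q ^ n) q) \<longlonglongrightarrow> 1"
proof -
  have "(\<lambda>n. qpoch_inf x q / qpoch x q n) \<longlonglongrightarrow> qpoch_inf x q / qpoch_inf x q"
    using assms by (intro tendsto_intros qpoch_tendsto_qpoch_inf)
  moreover have "qpoch_inf x q / qpoch x q n = qpoch_inf (x * q ^ n) q" for n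
    using qpoch_inf_split[of x n] assms by auto
  ultimately show ?thesis
    using assms by simp
qed

lemma q_difference_solution:
  fixes F :: "complex \<Rightarrow> complex"
  assumes step: "\<And>n. (1 - A * (z * q ^ n)) * F (z * q ^ n) = (1 - B * (z * q ^ n)) * F (z * q ^ Suc n)"
    and lim: "(\<lambda>n. F (z * q ^ n)) \<longlonglongrightarrow> F 0"
  shows "F z * qpoch_inf (A * z) q = qpoch_inf (B * z) q * F 0"
proof -
  have iterate: "F z * qpoch (A * z) q n = qpoch (B * z) q n * F (z * q ^ n)" for n
  proof (induction n)
    case (Suc n)
    have "F z * qpoch (A * z) q (Suc n) = (F z * qpoch (A * z) q n) * (1 - A * (z * q ^ n))"
      by (simp add: qpoch_Suc mult_ac)
    also have "\<dots> = qpoch (B * z) q n * ((1 - A * (z * q ^ n)) * F (z * q ^ n))"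
      by (simp add: Suc.IH mult_ac)
    also have "\<dots> = qpoch (B * z) q n * ((1 - B * (z * q ^ n)) * F (z * q ^ Suc n))"
      by (simp only: step)
    also have "\<dots> = qpoch (B * z) q (Suc n) * F (z * q ^ Suc n)"
      by (simp add: qpoch_Suc mult_ac)
    finally show ?case .
  qed simp
  have "(\<lambda>n. F z * qpoch (A * z) q n) \<longlonglongrightarrow> F z * qpoch_inf (A * z) q"
    by (intro tendsto_intros qpoch_tendsto_qpoch_inf)
  moreover have "(\<lambda>n. F z * qpoch (A * z) q n) \<longlonglongrightarrow> qpoch_inf (B * z) q * F 0"
    unfolding iterate by (intro tendsto_intros qpoch_tendsto_qpoch_inf lim)
  ultimately show ?thesis
    by (rule LIMSEQ_unique)
qed

lemma suminf_tendsto_along_nome_powers: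
  fixes f :: "complex \<Rightarrow> nat \<Rightarrow> complex"
  assumes cont: "\<And>k. isCont (\<lambda>z. f z k) 0"
    and bound: "\<And>n k. norm (f (z * q ^ n) k) \<le> M k" and "summable M"
  shows "(\<lambda>n. suminf (f (z * q ^ n))) \<longlonglongrightarrow> suminf (f 0)"
proof -
  have lim: "(\<lambda>n. f (z * q ^ n) k) \<longlonglongrightarrow> f 0 k" for k
    using isCont_tendsto_compose[OF cont nome_power_tendsto_0] .
  have "eventually (\<lambda>(k, n). norm (f (z * q ^ n) k) \<le> M k) (at_top \<times>\<^sub>F sequentially)"
    by (intro always_eventually) (auto intro: bound)
  from tannerys_theorem[OF lim this \<open>summable M\<close>] show ?thesis
    by simp
qed

text \<open>The homogeneous q-Pochhammer symbol \<open>hpoch x y n = x\<^sup>n (y/x; q)\<^sub>n\<close>, which stays meaningful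
  at \<open>x = 0\<close>.\<close>
definition hpoch :: "complex \<Rightarrow> complex \<Rightarrow> nat \<Rightarrow> complex" where
  "hpoch x y n = (\<Prod>k<n. x - y * q ^ k)"

lemma hpoch_0 [simp]: "hpoch x y 0 = 1"
  by (simp add: hpoch_def)

lemma hpoch_Suc: "hpoch x y (Suc n) = hpoch x y n * (x - y * q ^ n)"
  by (simp add: hpoch_def)

lemma hpoch_Suc_shift: "hpoch x y (Suc n) = (x - y) * hpoch x (y * q) n"
  unfolding hpoch_def prod.lessThan_Suc_shift by (simp add: mult_ac)

lemma hpoch_mult_nome: "hpoch (x * q) (y * q) n = q ^ n * hpoch x y n"
  by (induction n) (simp_all add: hpoch_Suc algebra_simps)

lemma hpoch_add: "hpoch x y (m + n) = hpoch x y m * hpoch x (y * q ^ m) n"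
  by (induction n) (simp_all add: hpoch_Suc power_add mult_ac)

lemma hpoch_uminus: "hpoch (- x) (- y) n = (-1) ^ n * hpoch x y n"
  by (induction n) (simp_all add: hpoch_Suc algebra_simps)

lemma hpoch_at_nome: "hpoch q q (Suc n) = 0"
  by (simp add: hpoch_Suc_shift)

lemma hpoch_zero_minus_nome: "hpoch 0 (- q) n = q ^ (n * (n + 1) div 2)"
proof (induction n)
  case (Suc n)
  have "Suc n * (Suc n + 1) div 2 = n * (n + 1) div 2 + Suc n"
    by (induction n) auto
  then show ?case
    using Suc.IH by (simp add: hpoch_Suc power_add)
qed simp

lemma hpoch_nome_factor: "(c - 1) * hpoch c q n = hpoch c 1 n * (c - q ^ n)"
  using hpoch_Suc_shift[of c 1 n] hpoch_Suc[of c 1 n] by simp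

lemma hpoch_eq_qpoch:
  assumes "x \<noteq> 0"
  shows "hpoch x y n = qpoch (y / x) q n * x ^ n"
  using assms by (induction n) (simp_all add: hpoch_Suc qpoch_Suc field_simps)

lemma norm_hpoch_le: "norm (hpoch x y n) \<le> (\<Prod>k<n. norm x + norm y * norm q ^ k)"
  unfolding hpoch_def prod_norm[symmetric]
  by (intro prod_mono) (auto simp: norm_mult norm_power intro: norm_triangle_ineq4[THEN order_trans])

end

section \<open>The q-Gauss summation\<close>

locale q_gauss = nome +
  fixes y u v :: complex
  assumes norm_y_less_1: "norm y < 1" and norm_u_le_1: "norm u \<le> 1" and norm_v_le_1: "norm v \<le> 1"
    and norm_uv_less_1: "norm (u * v) < 1"
begin

definition gauss_term :: "complex \<Rightarrow> nat \<Rightarrow> complex" where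
  "gauss_term x m = hpoch x u m * hpoch y v m / (qpoch q q m * qpoch (u * v) q m)"

definition gauss_sum :: "complex \<Rightarrow> complex" where
  "gauss_sum x = suminf (gauss_term x)"

definition gauss_ratio_bound :: "nat \<Rightarrow> real" where
  "gauss_ratio_bound k = (1 + norm q ^ k) * (norm y + norm q ^ k) /
     ((1 - norm q ^ Suc k) * (1 - norm (u * v) * norm q ^ k))"

lemma gauss_term_0 [simp]: "gauss_term x 0 = 1"
  by (simp add: gauss_term_def)

lemma norm_uv_power_less_1: "norm (u * v) * norm q ^ k < 1"
  using norm_uv_less_1 norm_power_nome_le_1[of k]
  by (metis le_less_trans mult_left_le norm_ge_zero norm_power)

lemma gauss_denominator_nonzero: "qpoch q q m * qpoch (u * v) q m \<noteq> 0"
  using norm_nome_less_1 norm_uv_less_1 by (simp add: qpoch_nonzero)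

lemma gauss_term_eq_prod:
  "gauss_term x m =
     (\<Prod>k<m. (x - u * q ^ k) * (y - v * q ^ k) / ((1 - q ^ Suc k) * (1 - u * v * q ^ k)))"
  unfolding gauss_term_def hpoch_def qpoch_def by (simp add: prod_dividef prod.distrib)

lemma gauss_ratio_bound_nonneg: "0 \<le> gauss_ratio_bound k"
  using norm_nome_power_Suc_less_1[of k] norm_uv_power_less_1[of k] unfolding gauss_ratio_bound_def
  by (intro divide_nonneg_pos mult_nonneg_nonneg mult_pos_pos) auto

lemma gauss_ratio_bound_tendsto: "gauss_ratio_bound \<longlonglongrightarrow> norm y"
proof -
  have lim: "(\<lambda>k. norm q ^ k) \<longlonglongrightarrow> 0"
    using norm_nome_less_1 by (intro LIMSEQ_power_zero) auto
  then have lim_Suc: "(\<lambda>k. norm q ^ Suc k) \<longlonglongrightarrow> 0"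
    by (rule LIMSEQ_Suc)
  have "gauss_ratio_bound \<longlonglongrightarrow> (1 + 0) * (norm y + 0) / ((1 - 0) * (1 - norm (u * v) * 0))"
    unfolding gauss_ratio_bound_def by (intro tendsto_intros lim lim_Suc) auto
  then show ?thesis
    by simp
qed

lemma norm_gauss_factor_le:
  assumes "norm x \<le> 1"
  shows "norm ((x - u * q ^ k) * (y - v * q ^ k) / ((1 - q ^ Suc k) * (1 - u * v * q ^ k)))
           \<le> gauss_ratio_bound k"
proof -
  have "norm (x - u * q ^ k) \<le> 1 + norm q ^ k" "norm (y - v * q ^ k) \<le> norm y + norm q ^ k"
    using norm_triangle_ineq4[of x "u * q ^ k"] norm_triangle_ineq4[of y "v * q ^ k"] assms
      mult_left_le_one_le[of "norm q ^ k" "norm u"] mult_left_le_one_le[of "norm q ^ k" "norm v"]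
      norm_u_le_1 norm_v_le_1
    by (auto simp: norm_mult norm_power)
  then have num: "norm ((x - u * q ^ k) * (y - v * q ^ k)) \<le> (1 + norm q ^ k) * (norm y + norm q ^ k)"
    unfolding norm_mult by (intro mult_mono) auto
  have pos: "0 < 1 - norm q ^ Suc k" "0 < 1 - norm (u * v) * norm q ^ k"
    using norm_nome_power_Suc_less_1[of k] norm_uv_power_less_1[of k] by simp_all
  have "1 - norm q ^ Suc k \<le> norm (1 - q ^ Suc k)"
    by (metis norm_one norm_power norm_triangle_ineq2)
  moreover have "1 - norm (u * v) * norm q ^ k \<le> norm (1 - u * v * q ^ k)"
    by (metis norm_one norm_mult norm_power norm_triangle_ineq2)
  ultimately have "(1 - norm q ^ Suc k) * (1 - norm (u * v) * norm q ^ k)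
                     \<le> norm (1 - q ^ Suc k) * norm (1 - u * v * q ^ k)"
    using pos by (intro mult_mono) auto
  then have den: "(1 - norm q ^ Suc k) * (1 - norm (u * v) * norm q ^ k)
                    \<le> norm ((1 - q ^ Suc k) * (1 - u * v * q ^ k))"
    by (simp only: norm_mult)
  show ?thesis
    unfolding gauss_ratio_bound_def norm_divide by (rule frac_le[OF _ num _ den]) (use pos in auto)
qed

lemma norm_gauss_term_le:
  assumes "norm x \<le> 1"
  shows "norm (gauss_term x m) \<le> (\<Prod>k<m. gauss_ratio_bound k)"
  unfolding gauss_term_eq_prod prod_norm[symmetric]
  by (intro prod_mono conjI norm_gauss_factor_le assms norm_ge_zero)

lemma summable_gauss_ratio_bound_prod: "summable (\<lambda>m. \<Prod>k<m. gauss_ratio_bound k)"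
  by (rule summable_prod_lessThan[OF gauss_ratio_bound_nonneg gauss_ratio_bound_tendsto norm_y_less_1])

lemma summable_gauss_term:
  assumes "norm x \<le> 1"
  shows "summable (gauss_term x)"
  by (rule summable_comparison_test'[OF summable_gauss_ratio_bound_prod])
    (use norm_gauss_term_le[OF assms] in auto)

lemma gauss_term_telescope_step:
  "(1 - x * y) * gauss_term x (Suc N) - (1 - x * v) * gauss_term (x * q) (Suc N)
     = x * gauss_term x N * (y - v * q ^ N) - x * gauss_term x (Suc N) * (y - v * q ^ Suc N)"
proof -
  define w where "w = q ^ N"
  define d1 where "d1 = 1 - q * w"
  define d2 where "d2 = 1 - u * v * w"
  define K where "K = hpoch x u N * hpoch y v N * (y - v * w) / (qpoch q q N * qpoch (u * v) q N * d1 * d2)"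
  have "qpoch q q (Suc N) * qpoch (u * v) q (Suc N) \<noteq> 0"
    by (rule gauss_denominator_nonzero)
  then have nz: "qpoch q q N * qpoch (u * v) q N \<noteq> 0" "d1 \<noteq> 0" "d2 \<noteq> 0"
    by (auto simp: qpoch_Suc d1_def d2_def w_def)
  have shift: "hpoch (x * q) u (Suc N) = (x * q - u) * w * hpoch x u N"
    by (simp add: hpoch_Suc_shift hpoch_mult_nome w_def)
  have term_x: "gauss_term x (Suc N) = K * (x - u * w)"
    unfolding gauss_term_def hpoch_Suc qpoch_Suc K_def using nz
    by (simp add: w_def d1_def d2_def field_simps)
  have term_xq: "gauss_term (x * q) (Suc N) = K * ((x * q - u) * w)"
    unfolding gauss_term_def shift qpoch_Suc hpoch_Suc[of y] K_def using nz
    by (simp add: w_def d1_def d2_def field_simps)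
  have term_N: "x * gauss_term x N * (y - v * w) = K * (x * d1 * d2)"
    unfolding gauss_term_def K_def using nz by (simp add: field_simps)
  have "(1 - x * y) * (K * (x - u * w)) - (1 - x * v) * (K * ((x * q - u) * w))
          = K * (x * d1 * d2) - x * (K * (x - u * w)) * (y - v * (q * w))"
    unfolding d1_def d2_def by algebra
  then show ?thesis
    unfolding term_x term_xq term_N[unfolded w_def] by (simp add: w_def)
qed

lemma gauss_term_telescope:
  "(1 - x * y) * (\<Sum>m<Suc N. gauss_term x m) - (1 - x * v) * (\<Sum>m<Suc N. gauss_term (x * q) m)
     = - x * gauss_term x N * (y - v * q ^ N)"
proof (induction N)
  case (Suc N)
  have "(1 - x * y) * (\<Sum>m<Suc (Suc N). gauss_term x m) - (1 - x * v) * (\<Sum>m<Suc (Suc N). gauss_term (x * q) m)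
      = ((1 - x * y) * (\<Sum>m<Suc N. gauss_term x m) - (1 - x * v) * (\<Sum>m<Suc N. gauss_term (x * q) m))
        + ((1 - x * y) * gauss_term x (Suc N) - (1 - x * v) * gauss_term (x * q) (Suc N))"
    by (simp add: algebra_simps)
  also have "\<dots> = - x * gauss_term x (Suc N) * (y - v * q ^ Suc N)"
    unfolding Suc.IH gauss_term_telescope_step by (simp add: algebra_simps)
  finally show ?case .
qed (simp add: algebra_simps)

lemma gauss_sum_q_difference:
  assumes "norm x \<le> 1"
  shows "(1 - x * y) * gauss_sum x = (1 - x * v) * gauss_sum (x * q)"
proof -
  have "norm (x * q) \<le> 1"
    using norm_mult_power_nome_le[of x 1] assms by simp
  then have sums: "(\<lambda>N. \<Sum>m<Suc N. gauss_term x m) \<longlonglongrightarrow> gauss_sum x"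
    "(\<lambda>N. \<Sum>m<Suc N. gauss_term (x * q) m) \<longlonglongrightarrow> gauss_sum (x * q)"
    unfolding gauss_sum_def using assms
    by (intro LIMSEQ_Suc[OF summable_LIMSEQ] summable_gauss_term; simp)+
  have "gauss_term x \<longlonglongrightarrow> 0"
    by (rule summable_LIMSEQ_zero[OF summable_gauss_term[OF assms]])
  then have "(\<lambda>N. - x * gauss_term x N * (y - v * q ^ N)) \<longlonglongrightarrow> - x * 0 * (y - v * 0)"
    by (intro tendsto_intros LIMSEQ_power_zero norm_nome_less_1)
  then have "(\<lambda>N. (1 - x * y) * (\<Sum>m<Suc N. gauss_term x m)
                  - (1 - x * v) * (\<Sum>m<Suc N. gauss_term (x * q) m)) \<longlonglongrightarrow> 0"
    unfolding gauss_term_telescope by simp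
  moreover have "(\<lambda>N. (1 - x * y) * (\<Sum>m<Suc N. gauss_term x m)
                  - (1 - x * v) * (\<Sum>m<Suc N. gauss_term (x * q) m))
                 \<longlonglongrightarrow> (1 - x * y) * gauss_sum x - (1 - x * v) * gauss_sum (x * q)"
    by (intro tendsto_intros sums)
  ultimately show ?thesis
    using LIMSEQ_unique by fastforce
qed

lemma gauss_sum_tendsto:
  assumes "norm x \<le> 1"
  shows "(\<lambda>n. gauss_sum (x * q ^ n)) \<longlonglongrightarrow> gauss_sum 0"
  unfolding gauss_sum_def
proof (rule suminf_tendsto_along_nome_powers)
  show "isCont (\<lambda>z. gauss_term z k) 0" for k
    unfolding gauss_term_def hpoch_def by (intro continuous_intros) (use gauss_denominator_nonzero in auto)
  show "norm (gauss_term (x * q ^ n) k) \<le> (\<Prod>i<k. gauss_ratio_bound i)" for n k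
    using assms norm_mult_power_nome_le[of x n] by (intro norm_gauss_term_le) auto
qed (rule summable_gauss_ratio_bound_prod)

lemma gauss_sum_at_u: "gauss_sum u = 1"
proof -
  have "gauss_term u m = 0" if "m > 0" for m
    using that unfolding gauss_term_def hpoch_def
    by (auto intro!: prod_zero bexI[of _ 0])
  then have "gauss_term u = (\<lambda>m. if m = 0 then 1 else 0)"
    by auto
  then show ?thesis
    unfolding gauss_sum_def using sums_single[of 0 "\<lambda>_. 1::complex"] by (simp add: sums_iff)
qed

theorem gauss_sum_product:
  assumes "norm x \<le> 1"
  shows "gauss_sum x * qpoch_inf (x * y) q * qpoch_inf (u * v) q
           = qpoch_inf (x * v) q * qpoch_inf (u * y) q"
proof -
  have at_0: "gauss_sum z * qpoch_inf (y * z) q = qpoch_inf (v * z) q * gauss_sum 0"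
    if "norm z \<le> 1" for z
  proof (rule q_difference_solution)
    fix n
    show "(1 - y * (z * q ^ n)) * gauss_sum (z * q ^ n)
            = (1 - v * (z * q ^ n)) * gauss_sum (z * q ^ Suc n)"
      using gauss_sum_q_difference[of "z * q ^ n"] norm_mult_power_nome_le[of z n] that
      by (simp add: mult_ac)
  qed (rule gauss_sum_tendsto[OF that])
  show ?thesis
    using at_0[OF assms] at_0[OF norm_u_le_1] gauss_sum_at_u by (simp add: mult_ac)
qed

end

text \<open>The q-Gauss summation
  \<open>\<^sub>2\<phi>\<^sub>1(u/x, v/y; uv; q, xy) = (xv, uy; q)\<^sub>\<infinity> / (xy, uv; q)\<^sub>\<infinity>\<close>,
  written homogeneously so that it stays valid at \<open>x = 0\<close> and \<open>y = 0\<close>.\<close>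

lemma (in nome) q_gauss_sums:
  assumes "norm x \<le> 1" "norm y < 1" "norm u \<le> 1" "norm v \<le> 1" "norm (u * v) < 1"
  shows "(\<lambda>m. hpoch x u m * hpoch y v m / (qpoch q q m * qpoch (u * v) q m))
           sums (qpoch_inf (x * v) q * qpoch_inf (u * y) q / (qpoch_inf (x * y) q * qpoch_inf (u * v) q))"
proof -
  interpret q_gauss q y u v
    using assms by unfold_locales (auto simp: nome_nonzero norm_nome_less_1)
  have "norm (x * y) < 1"
    using assms(1,2) mult_left_le_one_le[of "norm y" "norm x"] by (simp add: norm_mult)
  then have "qpoch_inf (x * y) q \<noteq> 0" "qpoch_inf (u * v) q \<noteq> 0"
    using assms(5) by (simp_all add: qpoch_inf_nonzero)
  then have "gauss_sum x = qpoch_inf (x * v) q * qpoch_inf (u * y) q / (qpoch_inf (x * y) q * qpoch_inf (u * v) q)"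
    using gauss_sum_product[OF assms(1)] by (simp add: field_simps)
  then show ?thesis
    using summable_gauss_term[OF assms(1)] unfolding gauss_sum_def gauss_term_def[abs_def]
    by (simp add: sums_iff)
qed

section \<open>A Bailey pair\<close>

context nome
begin

definition qexp_fps :: "complex \<Rightarrow> complex fps" where
  "qexp_fps s = Abs_fps (\<lambda>k. s ^ k / qpoch q q k)"

lemma qexp_fps_q_difference:
  "qexp_fps s oo (fps_const q * fps_X) = qexp_fps s * (1 - fps_const s * fps_X)"
proof (rule fps_ext)
  fix n
  have lhs: "fps_nth (qexp_fps s * (1 - fps_const s * fps_X)) n
               = fps_nth (qexp_fps s) n - (if n = 0 then 0 else s * fps_nth (qexp_fps s) (n - 1))"
    by (simp add: right_diff_distrib mult.assoc[symmetric])
  show "fps_nth (qexp_fps s oo (fps_const q * fps_X)) n = fps_nth (qexp_fps s * (1 - fps_const s * fps_X)) n"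
  proof (cases n)
    case (Suc m)
    have "s ^ Suc m / qpoch q q (Suc m) - s * (s ^ m / qpoch q q m) = q ^ Suc m * (s ^ Suc m / qpoch q q (Suc m))"
      using qpoch_nome_nonzero[of m] power_Suc_nome_neq_1[of m] by (simp add: qpoch_Suc field_simps)
    then show ?thesis
      unfolding lhs using Suc by (simp add: qexp_fps_def)
  qed (simp add: lhs qexp_fps_def)
qed

text \<open>The left-hand side is the coefficient of \<open>z\<^bsup>2n\<^esup>\<close> in
  \<open>e\<^sub>q(z) e\<^sub>q(-z) = qexp_fps 1 * qexp_fps (-1)\<close>.  This product gets multiplied by \<open>1 - z\<^sup>2\<close>
  under \<open>z \<mapsto> q z\<close>, so its coefficients satisfy \<open>(1 - q\<^bsup>N+2\<^esup>) p(N + 2) = p(N)\<close>.\<close>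
lemma sum_qpoch_alternating_even:
  "(\<Sum>i=0..2 * n. (-1) ^ (2 * n - i) / (qpoch q q i * qpoch q q (2 * n - i))) = 1 / qpoch (q\<^sup>2) (q\<^sup>2) n"
proof -
  define P where "P = qexp_fps 1 * qexp_fps (-1)"
  have coeff: "fps_nth P N = (\<Sum>i=0..N. (-1) ^ (N - i) / (qpoch q q i * qpoch q q (N - i)))" for N
    by (simp add: P_def qexp_fps_def fps_mult_nth)
  have "P oo (fps_const q * fps_X)
          = qexp_fps 1 * (1 - fps_const 1 * fps_X) * (qexp_fps (-1) * (1 - fps_const (-1) * fps_X))"
    unfolding P_def by (simp add: fps_compose_mult_distrib qexp_fps_q_difference del: fps_const_1_eq_1)
  also have "\<dots> = P * (1 - fps_X ^ 2)"
    by (simp add: P_def fps_const_neg[symmetric] algebra_simps power2_eq_square del: fps_const_neg)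
  finally have dilate: "P oo (fps_const q * fps_X) = P * (1 - fps_X ^ 2)" .
  have rec: "fps_nth P (Suc (Suc N)) * (1 - q ^ Suc (Suc N)) = fps_nth P N" for N
  proof -
    have "q ^ Suc (Suc N) * fps_nth P (Suc (Suc N)) = fps_nth (P * (1 - fps_X ^ 2)) (Suc (Suc N))"
      by (simp flip: dilate)
    also have "\<dots> = fps_nth P (Suc (Suc N)) - fps_nth P N"
      by (simp add: right_diff_distrib fps_X_power_mult_right_nth)
    finally show ?thesis
      by (simp add: algebra_simps)
  qed
  have "fps_nth P (2 * n) = 1 / qpoch (q\<^sup>2) (q\<^sup>2) n"
  proof (induction n)
    case (Suc n)
    have "1 - q ^ Suc (Suc (2 * n)) \<noteq> 0"
      using power_Suc_nome_neq_1[of "Suc (2 * n)"] by simp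
    then have "fps_nth P (2 * Suc n) = fps_nth P (2 * n) / (1 - q ^ Suc (Suc (2 * n)))"
      using rec[of "2 * n"] by (simp add: field_simps)
    then show ?case
      using Suc.IH by (simp add: qpoch_Suc power_mult[symmetric] power_add[symmetric])
  qed (simp add: coeff)
  then show ?thesis
    by (simp add: coeff)
qed

lemma symmetric_sum_term_reindex:
  assumes "i \<le> 2 * n"
  shows "(-1) powi (int i - int n) / (qpoch q q (n - nat \<bar>int i - int n\<bar>) * qpoch q q (n + nat \<bar>int i - int n\<bar>))
           = (-1) ^ n * ((-1) ^ (2 * n - i) / (qpoch q q i * qpoch q q (2 * n - i)))"
proof -
  define d where "d = int i - int n"
  have dist: "nat \<bar>d\<bar> = (if n \<le> i then i - n else n - i)"
    by (auto simp: d_def)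
  have "n + (2 * n - i) = nat \<bar>d\<bar> + 2 * (if n \<le> i then 2 * n - i else n)"
    unfolding dist using assms by auto
  then have "(-1::complex) ^ nat \<bar>d\<bar> = (-1) ^ (n + (2 * n - i))"
    by (simp add: power_add power_mult)
  moreover have "(-1::complex) powi d = (-1) ^ nat \<bar>d\<bar>"
    by (simp add: power_int_def)
  ultimately have "(-1::complex) powi d = (-1) ^ (n + (2 * n - i))"
    by simp
  then have sign: "(-1::complex) powi d = (-1) ^ n * (-1) ^ (2 * n - i)"
    by (simp add: power_add)
  have "qpoch q q (n - nat \<bar>d\<bar>) * qpoch q q (n + nat \<bar>d\<bar>) = qpoch q q i * qpoch q q (2 * n - i)"
  proof (cases "n \<le> i")
    case True
    then have "n - (i - n) = 2 * n - i" "n + (i - n) = i"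
      using assms by auto
    with True show ?thesis
      unfolding dist by (simp only: if_True mult.commute)
  next
    case False
    then have "n - (n - i) = i" "n + (n - i) = 2 * n - i"
      by auto
    with False show ?thesis
      unfolding dist by (simp only: if_False)
  qed
  then show ?thesis
    by (simp add: sign flip: d_def)
qed

lemma sum_symmetric_qpoch_alternating:
  "(\<Sum>j\<in>{- int n..int n}. (-1) powi j / (qpoch q q (n - nat \<bar>j\<bar>) * qpoch q q (n + nat \<bar>j\<bar>)))
     = (-1) ^ n / qpoch (q\<^sup>2) (q\<^sup>2) n"
proof -
  have "(\<Sum>j\<in>{- int n..int n}. (-1) powi j / (qpoch q q (n - nat \<bar>j\<bar>) * qpoch q q (n + nat \<bar>j\<bar>)))
          = (\<Sum>i=0..2 * n. (-1) ^ n * ((-1) ^ (2 * n - i) / (qpoch q q i * qpoch q q (2 * n - i))))"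
  proof (rule sum.reindex_bij_witness[of _ "\<lambda>i. int i - int n" "\<lambda>j. nat (j + int n)"])
    fix j assume "j \<in> {- int n..int n}"
    then have "nat (j + int n) \<le> 2 * n" "int (nat (j + int n)) - int n = j"
      by auto
    then show "(-1) ^ n * ((-1) ^ (2 * n - nat (j + int n))
                 / (qpoch q q (nat (j + int n)) * qpoch q q (2 * n - nat (j + int n))))
               = (-1) powi j / (qpoch q q (n - nat \<bar>j\<bar>) * qpoch q q (n + nat \<bar>j\<bar>))"
      using symmetric_sum_term_reindex[of "nat (j + int n)" n] by simp
  qed auto
  also have "\<dots> = (-1) ^ n / qpoch (q\<^sup>2) (q\<^sup>2) n"
    unfolding sum_distrib_left[symmetric] sum_qpoch_alternating_even by simp
  finally show ?thesis .
qed

lemma bailey_telescoping_term: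
  assumes "r < n"
  shows "(1 - q ^ (2 * r + 1)) * q ^ r\<^sup>2 / (qpoch q q (n - r) * qpoch q q (n + r + 1))
           = q ^ r\<^sup>2 / (qpoch q q (n - r) * qpoch q q (n + r))
             - q ^ (Suc r)\<^sup>2 / (qpoch q q (n - Suc r) * qpoch q q (n + Suc r))"
proof -
  define m where "m = n - Suc r"
  define A where "A = qpoch q q m"
  define B where "B = qpoch q q (n + r)"
  define a where "a = q ^ (2 * r + 1)"
  define b where "b = q ^ Suc m"
  define c where "c = q ^ r\<^sup>2"
  have ab: "a * b = q ^ Suc (n + r)"
    unfolding a_def b_def m_def power_add[symmetric] using assms
    by (intro arg_cong[where f = "power q"]) simp
  have "n - r = Suc m"
    using assms by (simp add: m_def)
  then have qA: "qpoch q q (n - r) = A * (1 - b)"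
    by (simp add: A_def b_def qpoch_Suc)
  have qB: "qpoch q q (n + r + 1) = B * (1 - a * b)"
    by (simp add: B_def ab qpoch_Suc)
  have "(Suc r)\<^sup>2 = r\<^sup>2 + (2 * r + 1)"
    by (simp add: power2_eq_square)
  then have Sq: "q ^ (Suc r)\<^sup>2 = c * a"
    by (simp only: a_def c_def power_add)
  have nz: "A \<noteq> 0" "B \<noteq> 0" "1 - b \<noteq> 0" "1 - a * b \<noteq> 0"
    using qpoch_nome_nonzero power_Suc_nome_neq_1 unfolding ab unfolding A_def B_def b_def by auto
  have "c / (A * (1 - b) * B) - c * a / (A * (B * (1 - a * b)))
          = (c * (1 - a * b) - c * a * (1 - b)) / (A * (1 - b) * (B * (1 - a * b)))"
    using nz by (simp add: diff_divide_distrib)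
  also have "c * (1 - a * b) - c * a * (1 - b) = (1 - a) * c"
    by (simp add: algebra_simps)
  finally have "(1 - a) * c / (A * (1 - b) * (B * (1 - a * b)))
                  = c / (A * (1 - b) * B) - c * a / (A * (B * (1 - a * b)))" ..
  moreover have "n - Suc r = m" "n + Suc r = n + r + 1"
    by (simp_all add: m_def)
  ultimately show ?thesis
    by (simp only: qA qB Sq A_def[symmetric] B_def[symmetric] a_def[symmetric] c_def[symmetric] mult.assoc)
qed

lemma bailey_telescoping_sum:
  assumes "k \<le> n"
  shows "(\<Sum>r=k..n. (1 - q ^ (2 * r + 1)) * q ^ r\<^sup>2 / (qpoch q q (n - r) * qpoch q q (n + r + 1)))
           = q ^ k\<^sup>2 / (qpoch q q (n - k) * qpoch q q (n + k))"
proof -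
  define f where "f r = q ^ r\<^sup>2 / (qpoch q q (n - r) * qpoch q q (n + r))" for r
  define T where "T r = (1 - q ^ (2 * r + 1)) * q ^ r\<^sup>2 / (qpoch q q (n - r) * qpoch q q (n + r + 1))" for r
  have "(\<Sum>r=k..n. T r) = (\<Sum>r=k..<n. T r) + T n"
    using assms by (simp add: sum.last_plus)
  also have "(\<Sum>r=k..<n. T r) = (\<Sum>r=k..<n. f r - f (Suc r))"
  proof (rule sum.cong[OF refl])
    fix r assume "r \<in> {k..<n}"
    then show "T r = f r - f (Suc r)"
      unfolding T_def f_def by (intro bailey_telescoping_term) simp
  qed
  also have "\<dots> = - (\<Sum>r=k..<n. f (Suc r) - f r)"
    by (simp add: sum_negf[symmetric])
  also have "\<dots> = f k - f n"
    using sum_Suc_diff'[OF assms, of f] by simp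
  also have "T n = f n"
  proof -
    have "qpoch q q (n + n + 1) = qpoch q q (n + n) * (1 - q ^ (2 * n + 1))"
      using qpoch_Suc[of q q "n + n"] by (simp add: mult_2)
    moreover have "1 - q ^ (2 * n + 1) \<noteq> 0"
      using power_Suc_nome_neq_1[of "2 * n"] by simp
    ultimately show ?thesis
      using qpoch_nome_nonzero[of "n + n"] by (simp add: T_def f_def)
  qed
  finally show ?thesis
    by (simp add: T_def f_def)
qed

definition bailey_alpha :: "nat \<Rightarrow> complex" where
  "bailey_alpha r = (\<Sum>j\<in>{- int r..int r}. (-1) powi j * (1 - q ^ (2 * r + 1)) * q powi (int r ^ 2 - j ^ 2))"

lemma bailey_inner_sum:
  assumes "\<bar>j\<bar> \<le> int n"
  shows "(\<Sum>r\<in>{r \<in> {..n}. \<bar>j\<bar> \<le> int r}. (-1) powi j * (1 - q ^ (2 * r + 1)) * q powi (int r ^ 2 - j ^ 2)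
                                     / (qpoch q q (n - r) * qpoch q q (n + r + 1)))
           = (-1) powi j / (qpoch q q (n - nat \<bar>j\<bar>) * qpoch q q (n + nat \<bar>j\<bar>))"
proof -
  define k where "k = nat \<bar>j\<bar>"
  have "k \<le> n"
    using assms by (simp add: k_def)
  have range: "{r \<in> {..n}. \<bar>j\<bar> \<le> int r} = {k..n}"
    by (auto simp: k_def)
  have "q powi (int r ^ 2 - j ^ 2) = q ^ r\<^sup>2 / q ^ k\<^sup>2" for r
  proof -
    have "j ^ 2 = int (k\<^sup>2)"
      by (simp add: k_def)
    then show ?thesis
      using nome_nonzero by (simp add: power_int_diff del: of_nat_power flip: of_nat_power)
  qed
  then have "(\<Sum>r\<in>{r \<in> {..n}. \<bar>j\<bar> \<le> int r}. (-1) powi j * (1 - q ^ (2 * r + 1)) * q powi (int r ^ 2 - j ^ 2)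
                                     / (qpoch q q (n - r) * qpoch q q (n + r + 1)))
           = (-1) powi j / q ^ k\<^sup>2 * (\<Sum>r=k..n. (1 - q ^ (2 * r + 1)) * q ^ r\<^sup>2
                                             / (qpoch q q (n - r) * qpoch q q (n + r + 1)))"
    unfolding range sum_distrib_left by (intro sum.cong) auto
  also have "\<dots> = (-1) powi j / (qpoch q q (n - k) * qpoch q q (n + k))"
    unfolding bailey_telescoping_sum[OF \<open>k \<le> n\<close>] using nome_nonzero by simp
  finally show ?thesis
    by (simp add: k_def)
qed

text \<open>Equivalently, \<open>(bailey_alpha r, (1 - q) (-1)\<^sup>n / (q\<^sup>2; q\<^sup>2)\<^sub>n)\<close> is a Bailey pair relative
  to \<open>a = q\<close>.\<close>

lemma bailey_pair:
  "(\<Sum>r\<le>n. bailey_alpha r / (qpoch q q (n - r) * qpoch q q (n + r + 1))) = (-1) ^ n / qpoch (q\<^sup>2) (q\<^sup>2) n"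
proof -
  define g where "g r j = (-1) powi j * (1 - q ^ (2 * r + 1)) * q powi (int r ^ 2 - j ^ 2)
                            / (qpoch q q (n - r) * qpoch q q (n + r + 1))" for r :: nat and j :: int
  have "(\<Sum>r\<le>n. bailey_alpha r / (qpoch q q (n - r) * qpoch q q (n + r + 1)))
          = (\<Sum>r\<in>{..n}. \<Sum>j\<in>{j \<in> {- int n..int n}. \<bar>j\<bar> \<le> int r}. g r j)"
  proof (rule sum.cong[OF refl])
    fix r assume "r \<in> {..n}"
    then have "{j \<in> {- int n..int n}. \<bar>j\<bar> \<le> int r} = {- int r..int r}"
      by auto
    then show "bailey_alpha r / (qpoch q q (n - r) * qpoch q q (n + r + 1))
                 = (\<Sum>j\<in>{j \<in> {- int n..int n}. \<bar>j\<bar> \<le> int r}. g r j)"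
      by (simp add: bailey_alpha_def g_def sum_divide_distrib)
  qed
  also have "\<dots> = (\<Sum>j\<in>{- int n..int n}. \<Sum>r\<in>{r \<in> {..n}. \<bar>j\<bar> \<le> int r}. g r j)"
    by (rule sum.swap_restrict) auto
  also have "\<dots> = (\<Sum>j\<in>{- int n..int n}. (-1) powi j / (qpoch q q (n - nat \<bar>j\<bar>) * qpoch q q (n + nat \<bar>j\<bar>)))"
  proof (rule sum.cong[OF refl])
    fix j assume "j \<in> {- int n..int n}"
    then show "(\<Sum>r\<in>{r \<in> {..n}. \<bar>j\<bar> \<le> int r}. g r j)
                 = (-1) powi j / (qpoch q q (n - nat \<bar>j\<bar>) * qpoch q q (n + nat \<bar>j\<bar>))"
      unfolding g_def by (intro bailey_inner_sum) auto
  qed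
  also have "\<dots> = (-1) ^ n / qpoch (q\<^sup>2) (q\<^sup>2) n"
    by (rule sum_symmetric_qpoch_alternating)
  finally show ?thesis .
qed

lemma norm_bailey_alpha_le: "norm (bailey_alpha r) \<le> 2 * (2 * real r + 1)"
proof -
  have "norm ((-1) powi j * (1 - q ^ (2 * r + 1)) * q powi (int r ^ 2 - j ^ 2)) \<le> 2"
    if "j \<in> {- int r..int r}" for j
  proof -
    have "j ^ 2 \<le> int r ^ 2"
      using that abs_le_square_iff[of j "int r"] by auto
    then have "norm (q powi (int r ^ 2 - j ^ 2)) \<le> 1"
      using norm_nome_less_1 by (simp add: power_int_def norm_power power_le_one)
    moreover have "norm (1 - q ^ (2 * r + 1)) \<le> 2"
      using norm_triangle_ineq4[of 1 "q ^ (2 * r + 1)"] norm_power_nome_le_1[of "2 * r + 1"] by simp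
    ultimately have "norm (1 - q ^ (2 * r + 1)) * norm (q powi (int r ^ 2 - j ^ 2)) \<le> 2 * 1"
      by (intro mult_mono) auto
    then show ?thesis
      by (simp add: norm_mult norm_power_int)
  qed
  then have "norm (bailey_alpha r) \<le> (\<Sum>j\<in>{- int r..int r}. 2)"
    unfolding bailey_alpha_def by (intro norm_sum[THEN order_trans] sum_mono)
  then show ?thesis
    by simp
qed

end

section \<open>The left-hand side and a q-difference equation\<close>

context nome
begin

definition pair_ratio_bound :: "real \<Rightarrow> nat \<Rightarrow> real" where
  "pair_ratio_bound s k = (s + norm q ^ Suc k) * (1 + norm q ^ Suc k) / (1 - norm q ^ (2 * k + 2))"

lemma norm_nome_power_even_less_1: "norm q ^ (2 * k + 2) < 1"
  using norm_nome_power_Suc_less_1[of "2 * k + 1"] by simp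

lemma pair_ratio_bound_nonneg: "0 \<le> s \<Longrightarrow> 0 \<le> pair_ratio_bound s k"
  using norm_nome_power_even_less_1[of k] by (simp add: pair_ratio_bound_def)

lemma summable_pair_ratio_bound_prod:
  assumes "0 \<le> s" "s < 1"
  shows "summable (\<lambda>n. \<Prod>k<n. pair_ratio_bound s k)"
proof (rule summable_prod_lessThan[OF pair_ratio_bound_nonneg[OF assms(1)]])
  have lim: "(\<lambda>k. norm q ^ k) \<longlonglongrightarrow> 0"
    using norm_nome_less_1 by (intro LIMSEQ_power_zero) auto
  have "norm q ^ 2 < 1"
    using norm_nome_less_1 by (simp add: power_less_one_iff)
  then have "(\<lambda>k. (norm q ^ 2) ^ Suc k) \<longlonglongrightarrow> 0"
    by (intro LIMSEQ_Suc LIMSEQ_power_zero) auto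
  moreover have "(norm q ^ 2) ^ Suc k = norm q ^ (2 * k + 2)" for k
    using power_mult[of "norm q" 2 "Suc k"] by simp
  ultimately have "(\<lambda>k. norm q ^ (2 * k + 2)) \<longlonglongrightarrow> 0"
    by simp
  moreover have "(\<lambda>k. norm q ^ Suc k) \<longlonglongrightarrow> 0"
    using LIMSEQ_Suc[OF lim] .
  ultimately have "(\<lambda>k. pair_ratio_bound s k) \<longlonglongrightarrow> (s + 0) * (1 + 0) / (1 - 0)"
    unfolding pair_ratio_bound_def by (intro tendsto_intros) auto
  then show "(\<lambda>k. pair_ratio_bound s k) \<longlonglongrightarrow> s"
    by simp
qed fact

lemma norm_pair_factor_le:
  assumes "norm w \<le> s + norm q ^ Suc k" "norm z \<le> 1 + norm q ^ Suc k"
  shows "norm (w * z / (1 - q\<^sup>2 * (q\<^sup>2) ^ k)) \<le> pair_ratio_bound s k"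
proof -
  have "norm (q\<^sup>2 * (q\<^sup>2) ^ k) = norm q ^ (2 * k + 2)"
    by (simp add: norm_mult norm_power power_mult[symmetric] power_add[symmetric])
  then have den: "1 - norm q ^ (2 * k + 2) \<le> norm (1 - q\<^sup>2 * (q\<^sup>2) ^ k)"
    by (metis norm_one norm_triangle_ineq2)
  have nonneg: "0 \<le> s + norm q ^ Suc k"
    using assms(1) norm_ge_zero[of w] by linarith
  have num: "norm (w * z) \<le> (s + norm q ^ Suc k) * (1 + norm q ^ Suc k)"
    unfolding norm_mult by (rule mult_mono[OF assms]) (use nonneg in auto)
  show ?thesis
    unfolding pair_ratio_bound_def norm_divide
    by (rule frac_le[OF _ num _ den]) (use nonneg norm_nome_power_even_less_1[of k] in auto)
qed

lemma norm_minus_nome_power_le: "norm x \<le> s \<Longrightarrow> norm (x - q ^ Suc k) \<le> s + norm q ^ Suc k"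
  by (metis add_mono norm_power norm_triangle_ineq4 order_trans order_refl)

end

locale transformation = nome +
  fixes a :: complex
  assumes norm_a_less_1: "norm a < 1"
begin

text \<open>\<open>lhs_sum c\<close> and \<open>phi_sum c\<close> are the series \<open>L(c)\<close> and \<open>S(c)\<close> of the proof idea, written with
  \<open>hpoch\<close> so that they make sense at \<open>c = 0\<close>, the limit point of the q-difference argument.\<close>
definition lhs_term :: "complex \<Rightarrow> nat \<Rightarrow> complex" where
  "lhs_term c n = hpoch c q n * q ^ (n * (n + 1) div 2) / (qpoch (q\<^sup>2) (q\<^sup>2) n * (1 + a * q ^ n))"

definition lhs_sum :: "complex \<Rightarrow> complex" where
  "lhs_sum c = suminf (lhs_term c)"

definition phi_term :: "complex \<Rightarrow> nat \<Rightarrow> complex" where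
  "phi_term c n = hpoch a q n * hpoch c q n * (-1) ^ n / qpoch (q\<^sup>2) (q\<^sup>2) n"

definition phi_sum :: "complex \<Rightarrow> complex" where
  "phi_sum c = suminf (phi_term c)"

lemma one_plus_a_nome_power_nonzero: "1 + a * q ^ n \<noteq> 0"
proof
  assume "1 + a * q ^ n = 0"
  then have "norm (a * q ^ n) = 1"
    by (metis add.inverse_unique norm_minus_cancel norm_one)
  then show False
    using norm_mult_power_nome_le[of a n] norm_a_less_1 by simp
qed

lemma norm_a_mult_less_1: "norm c \<le> 1 \<Longrightarrow> norm (a * c) < 1"
  using norm_a_less_1 mult_left_le[of "norm c" "norm a"] by (simp add: norm_mult)

lemma norm_lhs_term_le:
  assumes "norm c \<le> 1"
  shows "norm (lhs_term c n) \<le> (\<Prod>k<n. pair_ratio_bound 0 k) / (1 - norm a)"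
proof -
  have eq: "lhs_term c n = (\<Prod>k<n. q ^ Suc k * (c - q ^ Suc k) / (1 - q\<^sup>2 * (q\<^sup>2) ^ k)) / (1 + a * q ^ n)"
    unfolding lhs_term_def hpoch_def qpoch_def hpoch_zero_minus_nome[symmetric]
    by (simp add: prod_dividef prod.distrib mult_ac)
  have num: "norm (\<Prod>k<n. q ^ Suc k * (c - q ^ Suc k) / (1 - q\<^sup>2 * (q\<^sup>2) ^ k))
               \<le> (\<Prod>k<n. pair_ratio_bound 0 k)"
    unfolding prod_norm[symmetric] using assms
    by (intro prod_mono conjI norm_pair_factor_le norm_minus_nome_power_le) (auto simp: norm_mult norm_power)
  have den: "1 - norm a \<le> norm (1 + a * q ^ n)"
    using norm_mult_power_nome_le[of a n] norm_triangle_ineq2[of 1 "- (a * q ^ n)"] by simp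
  show ?thesis
    unfolding eq norm_divide
    by (rule frac_le[OF _ num _ den]) (use norm_a_less_1 in \<open>auto intro: prod_nonneg pair_ratio_bound_nonneg\<close>)
qed

lemma norm_phi_term_le:
  assumes "norm c \<le> 1"
  shows "norm (phi_term c n) \<le> (\<Prod>k<n. pair_ratio_bound (norm a) k)"
proof -
  have "phi_term c n = (-1) ^ n * (\<Prod>k<n. (a - q ^ Suc k) * (c - q ^ Suc k) / (1 - q\<^sup>2 * (q\<^sup>2) ^ k))"
    unfolding phi_term_def hpoch_def qpoch_def
    by (simp add: prod_dividef prod.distrib mult_ac)
  then have "norm (phi_term c n) = (\<Prod>k<n. norm ((a - q ^ Suc k) * (c - q ^ Suc k) / (1 - q\<^sup>2 * (q\<^sup>2) ^ k)))"
    by (simp add: norm_mult norm_power prod_norm)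
  also have "\<dots> \<le> (\<Prod>k<n. pair_ratio_bound (norm a) k)"
    using assms by (intro prod_mono conjI norm_pair_factor_le norm_minus_nome_power_le) auto
  finally show ?thesis .
qed

lemma summable_lhs_term:
  assumes "norm c \<le> 1"
  shows "summable (lhs_term c)"
proof -
  have "summable (\<lambda>n. (\<Prod>k<n. pair_ratio_bound 0 k) / (1 - norm a))"
    by (intro summable_divide summable_pair_ratio_bound_prod) auto
  then show ?thesis
    by (rule summable_comparison_test') (rule norm_lhs_term_le[OF assms])
qed

lemma summable_phi_term:
  assumes "norm c \<le> 1"
  shows "summable (phi_term c)"
proof -
  have "summable (\<lambda>n. \<Prod>k<n. pair_ratio_bound (norm a) k)"
    using norm_a_less_1 by (intro summable_pair_ratio_bound_prod) auto
  then show ?thesis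
    by (rule summable_comparison_test') (rule norm_phi_term_le[OF assms])
qed

lemma lhs_sum_tendsto:
  assumes "norm c \<le> 1"
  shows "(\<lambda>n. lhs_sum (c * q ^ n)) \<longlonglongrightarrow> lhs_sum 0"
  unfolding lhs_sum_def
proof (rule suminf_tendsto_along_nome_powers)
  show "isCont (\<lambda>z. lhs_term z k) 0" for k
    unfolding lhs_term_def hpoch_def
    by (intro continuous_intros) (use qpoch_nome_squared_nonzero one_plus_a_nome_power_nonzero in auto)
  show "norm (lhs_term (c * q ^ n) k) \<le> (\<Prod>i<k. pair_ratio_bound 0 i) / (1 - norm a)" for n k
    using assms norm_mult_power_nome_le[of c n] by (intro norm_lhs_term_le) auto
qed (intro summable_divide summable_pair_ratio_bound_prod; simp)

lemma phi_sum_tendsto: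
  assumes "norm c \<le> 1"
  shows "(\<lambda>n. phi_sum (c * q ^ n)) \<longlonglongrightarrow> phi_sum 0"
  unfolding phi_sum_def
proof (rule suminf_tendsto_along_nome_powers)
  show "isCont (\<lambda>z. phi_term z k) 0" for k
    unfolding phi_term_def hpoch_def
    by (intro continuous_intros) (use qpoch_nome_squared_nonzero in auto)
  show "norm (phi_term (c * q ^ n) k) \<le> (\<Prod>i<k. pair_ratio_bound (norm a) i)" for n k
    using assms norm_mult_power_nome_le[of c n] by (intro norm_phi_term_le) auto
qed (use norm_a_less_1 in \<open>intro summable_pair_ratio_bound_prod; simp\<close>)

lemma lhs_sum_at_nome: "lhs_sum q = 1 / (1 + a)"
proof -
  have "lhs_term q = (\<lambda>n. if n = 0 then 1 / (1 + a) else 0)"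
    by (rule ext) (auto simp: lhs_term_def hpoch_at_nome gr0_conv_Suc)
  then show ?thesis
    unfolding lhs_sum_def using sums_single[of 0 "\<lambda>_. 1 / (1 + a)"] by (simp add: sums_iff)
qed

lemma phi_sum_at_nome: "phi_sum q = 1"
proof -
  have "phi_term q = (\<lambda>n. if n = 0 then 1 else 0)"
    by (rule ext) (auto simp: phi_term_def hpoch_at_nome gr0_conv_Suc)
  then show ?thesis
    unfolding phi_sum_def using sums_single[of 0 "\<lambda>_. 1::complex"] by (simp add: sums_iff)
qed

lemma lhs_term_q_difference:
  "(1 - c) * lhs_term c n - (1 + a * c) * lhs_term (c * q) n
     = - c * (hpoch 0 (- q) n * hpoch c 1 n / (qpoch q q n * qpoch (- q) q n))"
proof -
  define H where "H = hpoch c q n"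
  define P where "P = hpoch c 1 n"
  define T where "T = q ^ (n * (n + 1) div 2)"
  define Q where "Q = qpoch (q\<^sup>2) (q\<^sup>2) n"
  define E where "E = 1 + a * q ^ n"
  have nz: "Q \<noteq> 0" "E \<noteq> 0"
    using qpoch_nome_squared_nonzero one_plus_a_nome_power_nonzero by (auto simp: Q_def E_def)
  have shift: "hpoch (c * q) q n = q ^ n * P"
    using hpoch_mult_nome[of c 1 n] by (simp add: P_def)
  have "(1 - c) * H = - (P * (c - q ^ n))"
    using hpoch_nome_factor[of c n] by (simp add: H_def P_def algebra_simps)
  then have "(1 - c) * (H * T / (Q * E)) - (1 + a * c) * (q ^ n * P * T / (Q * E))
               = (- (P * (c - q ^ n)) * T - (1 + a * c) * (q ^ n * P) * T) / (Q * E)"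
    by (simp add: diff_divide_distrib mult.assoc[symmetric])
  also have "\<dots> = - c * (T * P) * E / (Q * E)"
    by (simp add: E_def algebra_simps)
  also have "\<dots> = - c * (T * P / Q)"
    using nz by simp
  finally show ?thesis
    by (simp add: lhs_term_def shift hpoch_zero_minus_nome qpoch_nome_mult_qpoch_minus_nome
        H_def P_def T_def Q_def E_def)
qed

lemma phi_term_q_difference:
  "(1 - c) * phi_term c n - phi_term (c * q) n
     = - c * (hpoch a q n * hpoch (- c) (- 1) n / (qpoch q q n * qpoch (- q) q n))"
proof -
  define P where "P = hpoch c 1 n"
  have shift: "hpoch (c * q) q n = q ^ n * P"
    using hpoch_mult_nome[of c 1 n] by (simp add: P_def)
  define H where "H = hpoch c q n"
  define A where "A = hpoch a q n"
  define s where "s = (-1::complex) ^ n"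
  define Q where "Q = qpoch (q\<^sup>2) (q\<^sup>2) n"
  have key: "(1 - c) * H - q ^ n * P = - c * P"
    using hpoch_nome_factor[of c n] by (simp add: H_def P_def algebra_simps)
  have "(1 - c) * (A * H * s / Q) - A * (q ^ n * P) * s / Q = A * s * ((1 - c) * H - q ^ n * P) / Q"
    by (simp add: algebra_simps diff_divide_distrib add_divide_distrib)
  also have "\<dots> = - c * (A * (s * P) / Q)"
    unfolding key by (simp add: algebra_simps)
  finally show ?thesis
    unfolding phi_term_def shift hpoch_uminus qpoch_nome_mult_qpoch_minus_nome
    by (simp only: A_def H_def s_def Q_def P_def)
qed

lemma lhs_sum_q_difference:
  assumes "norm c < 1"
  shows "(1 - c) * lhs_sum c - (1 + a * c) * lhs_sum (c * q) = - c * (qpoch_inf (- (q * c)) q / qpoch_inf (- q) q)"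
proof -
  have "(\<lambda>n. hpoch 0 (- q) n * hpoch c 1 n / (qpoch q q n * qpoch (- q) q n))
          sums (qpoch_inf (- (q * c)) q / qpoch_inf (- q) q)"
    using q_gauss_sums[of 0 c "- q" 1] assms norm_nome_less_1 by simp
  then have "(\<lambda>n. (1 - c) * lhs_term c n - (1 + a * c) * lhs_term (c * q) n)
               sums (- c * (qpoch_inf (- (q * c)) q / qpoch_inf (- q) q))"
    unfolding lhs_term_q_difference by (rule sums_mult)
  moreover have "norm (c * q) \<le> 1"
    using assms norm_mult_power_nome_le[of c 1] by simp
  then have "(\<lambda>n. (1 - c) * lhs_term c n - (1 + a * c) * lhs_term (c * q) n)
               sums ((1 - c) * lhs_sum c - (1 + a * c) * lhs_sum (c * q))"
    unfolding lhs_sum_def using assms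
    by (intro sums_diff sums_mult summable_sums summable_lhs_term) auto
  ultimately show ?thesis
    using sums_unique2 by metis
qed

lemma phi_sum_q_difference:
  assumes "norm c < 1"
  shows "(1 - c) * phi_sum c - phi_sum (c * q)
           = - c * (qpoch_inf (- a) q * qpoch_inf (- (q * c)) q / (qpoch_inf (- (a * c)) q * qpoch_inf (- q) q))"
proof -
  have "(\<lambda>n. hpoch a q n * hpoch (- c) (- 1) n / (qpoch q q n * qpoch (- q) q n))
          sums (qpoch_inf (- a) q * qpoch_inf (- (q * c)) q / (qpoch_inf (- (a * c)) q * qpoch_inf (- q) q))"
    using q_gauss_sums[of a "- c" q "- 1"] assms norm_a_less_1 norm_nome_less_1 by simp
  then have "(\<lambda>n. (1 - c) * phi_term c n - phi_term (c * q) n)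
               sums (- c * (qpoch_inf (- a) q * qpoch_inf (- (q * c)) q / (qpoch_inf (- (a * c)) q * qpoch_inf (- q) q)))"
    unfolding phi_term_q_difference by (rule sums_mult)
  moreover have "norm (c * q) \<le> 1"
    using assms norm_mult_power_nome_le[of c 1] by simp
  then have "(\<lambda>n. (1 - c) * phi_term c n - phi_term (c * q) n)
               sums ((1 - c) * phi_sum c - phi_sum (c * q))"
    unfolding phi_sum_def using assms
    by (intro sums_diff sums_mult summable_sums summable_phi_term) auto
  ultimately show ?thesis
    using sums_unique2 by metis
qed

definition lhs_phi_defect :: "complex \<Rightarrow> complex" where
  "lhs_phi_defect c = qpoch_inf (- a) q * lhs_sum c - qpoch_inf (- (a * c)) q * phi_sum c"

lemma lhs_phi_defect_q_difference:
  assumes "norm c < 1"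
  shows "(1 - c) * lhs_phi_defect c = (1 + a * c) * lhs_phi_defect (c * q)"
proof -
  define R where "R = qpoch_inf (- (q * c)) q / qpoch_inf (- q) q"
  have nz: "qpoch_inf (- (a * c)) q \<noteq> 0"
    using norm_a_mult_less_1[of c] assms by (intro qpoch_inf_nonzero) auto
  have unfold: "qpoch_inf (- (a * c)) q = (1 + a * c) * qpoch_inf (- (a * (c * q))) q"
    using qpoch_inf_unfold[of "- (a * c)"] by (simp add: mult_ac)
  have "(1 - c) * lhs_phi_defect c - (1 + a * c) * lhs_phi_defect (c * q)
          = qpoch_inf (- a) q * ((1 - c) * lhs_sum c - (1 + a * c) * lhs_sum (c * q))
            - qpoch_inf (- (a * c)) q * ((1 - c) * phi_sum c - phi_sum (c * q))"
    unfolding lhs_phi_defect_def unfold by (simp add: algebra_simps)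
  also have "\<dots> = qpoch_inf (- a) q * (- c * R) - qpoch_inf (- (a * c)) q * (- c * (qpoch_inf (- a) q * R / qpoch_inf (- (a * c)) q))"
    using lhs_sum_q_difference[OF assms] phi_sum_q_difference[OF assms] by (simp add: R_def)
  also have "\<dots> = 0"
    using nz by simp
  finally show ?thesis
    by simp
qed

lemma lhs_phi_defect_tendsto:
  assumes "norm c < 1"
  shows "(\<lambda>n. lhs_phi_defect (c * q ^ n)) \<longlonglongrightarrow> lhs_phi_defect 0"
proof -
  have "qpoch_inf (- (a * c)) q \<noteq> 0"
    using norm_a_mult_less_1[of c] assms by (intro qpoch_inf_nonzero) auto
  then have "(\<lambda>n. qpoch_inf (- (a * c) * q ^ n) q) \<longlonglongrightarrow> 1"
    by (rule qpoch_inf_tail_tendsto_1)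
  then have "(\<lambda>n. qpoch_inf (- a) q * lhs_sum (c * q ^ n) - qpoch_inf (- (a * c) * q ^ n) q * phi_sum (c * q ^ n))
               \<longlonglongrightarrow> qpoch_inf (- a) q * lhs_sum 0 - 1 * phi_sum 0"
    using assms by (intro tendsto_intros lhs_sum_tendsto phi_sum_tendsto) auto
  then show ?thesis
    by (simp add: lhs_phi_defect_def mult_ac)
qed

lemma lhs_phi_defect_at_nome: "lhs_phi_defect q = 0"
proof -
  have "1 + a \<noteq> 0"
    using one_plus_a_nome_power_nonzero[of 0] by simp
  then show ?thesis
    unfolding lhs_phi_defect_def lhs_sum_at_nome phi_sum_at_nome
    using qpoch_inf_unfold[of "- a"] by (simp add: mult_ac)
qed

theorem lhs_phi_relation:
  assumes "norm c < 1"
  shows "qpoch_inf (- a) q * lhs_sum c = qpoch_inf (- (a * c)) q * phi_sum c"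
proof -
  have solution: "lhs_phi_defect z * qpoch_inf (1 * z) q = qpoch_inf (- a * z) q * lhs_phi_defect 0"
    if "norm z < 1" for z
  proof (rule q_difference_solution)
    show "(1 - 1 * (z * q ^ n)) * lhs_phi_defect (z * q ^ n)
            = (1 - - a * (z * q ^ n)) * lhs_phi_defect (z * q ^ Suc n)" for n
      using lhs_phi_defect_q_difference[of "z * q ^ n"] norm_mult_power_nome_le[of z n] that
      by (simp add: mult_ac)
  qed (rule lhs_phi_defect_tendsto[OF that])
  have "norm (- a * q) < 1"
    using norm_a_mult_less_1[of q] norm_nome_less_1 by simp
  then have "lhs_phi_defect 0 = 0"
    using solution[OF norm_nome_less_1] lhs_phi_defect_at_nome qpoch_inf_nonzero by auto
  then have "lhs_phi_defect c = 0"
    using solution[OF assms] qpoch_inf_nonzero[OF assms] by simp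
  then show ?thesis
    by (simp add: lhs_phi_defect_def)
qed

end

section \<open>Expansion into the double series\<close>

lemma (in nome) inverse_qpoch_nome_bounded: "\<exists>K. \<forall>j. norm (inverse (qpoch q q j)) \<le> K"
proof -
  have "qpoch_inf q q \<noteq> 0"
    using norm_nome_less_1 by (rule qpoch_inf_nonzero)
  then have "(\<lambda>j. inverse (qpoch q q j)) \<longlonglongrightarrow> inverse (qpoch_inf q q)"
    by (intro tendsto_inverse qpoch_tendsto_qpoch_inf)
  then have "Bseq (\<lambda>j. inverse (qpoch q q j))"
    by (rule convergent_imp_Bseq[OF convergentI])
  then show ?thesis
    by (auto simp: Bseq_def)
qed

context transformation
begin

definition bailey_term :: "complex \<Rightarrow> nat \<Rightarrow> nat \<Rightarrow> complex" where
  "bailey_term c n r = hpoch a q n * hpoch c q n * bailey_alpha r / (qpoch q q (n - r) * qpoch q q (n + r + 1))"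

definition rhs_term :: "complex \<Rightarrow> nat \<Rightarrow> complex" where
  "rhs_term c r = bailey_alpha r * hpoch a q r * hpoch c q r / (qpoch (q * a) q r * qpoch (q * c) q r)"

lemma phi_term_eq_sum_bailey_term: "phi_term c n = (\<Sum>r\<le>n. bailey_term c n r)"
proof -
  have "(\<Sum>r\<le>n. bailey_term c n r)
          = hpoch a q n * hpoch c q n * (\<Sum>r\<le>n. bailey_alpha r / (qpoch q q (n - r) * qpoch q q (n + r + 1)))"
    unfolding bailey_term_def sum_distrib_left by (simp add: mult.assoc)
  then show ?thesis
    unfolding bailey_pair phi_term_def by simp
qed

lemma norm_bailey_term_le:
  assumes K: "\<And>j. norm (inverse (qpoch q q j)) \<le> K" and "r \<le> n"
  shows "norm (bailey_term c n r)
           \<le> 4 * K\<^sup>2 * ((real n + 1) * (\<Prod>k<n. (norm a + norm q ^ Suc k) * (norm c + norm q ^ Suc k)))"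
proof -
  have nonneg: "0 \<le> (\<Prod>k<n. (norm a + norm q ^ Suc k) * (norm c + norm q ^ Suc k))"
    by (intro prod_nonneg) auto
  have "norm (hpoch a q n * hpoch c q n) \<le> (\<Prod>k<n. (norm a + norm q ^ Suc k) * (norm c + norm q ^ Suc k))"
    using norm_hpoch_le[of a q n] norm_hpoch_le[of c q n]
    unfolding norm_mult prod.distrib by (intro mult_mono prod_nonneg) auto
  moreover have "norm (bailey_alpha r) \<le> 4 * (real n + 1)"
    using norm_bailey_alpha_le[of r] \<open>r \<le> n\<close> by simp
  moreover have "norm (inverse (qpoch q q (n - r))) * norm (inverse (qpoch q q (n + r + 1))) \<le> K\<^sup>2"
    unfolding power2_eq_square by (intro mult_mono K) (auto intro: order_trans[OF norm_ge_zero K])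
  ultimately have "norm (hpoch a q n * hpoch c q n) * norm (bailey_alpha r)
                     * (norm (inverse (qpoch q q (n - r))) * norm (inverse (qpoch q q (n + r + 1))))
                   \<le> (\<Prod>k<n. (norm a + norm q ^ Suc k) * (norm c + norm q ^ Suc k)) * (4 * (real n + 1)) * K\<^sup>2"
    using nonneg by (intro mult_mono mult_nonneg_nonneg) auto
  then show ?thesis
    unfolding bailey_term_def by (simp add: norm_mult norm_divide divide_inverse algebra_simps)
qed

lemma summable_bailey_term_rows:
  assumes "norm c < 1"
  shows "summable (\<lambda>n. \<Sum>r\<le>n. norm (bailey_term c n r))"
proof -
  obtain K where K: "\<And>j. norm (inverse (qpoch q q j)) \<le> K"
    using inverse_qpoch_nome_bounded by blast
  define \<rho> where "\<rho> k = (norm a + norm q ^ Suc k) * (norm c + norm q ^ Suc k)" for k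
  have "(\<lambda>k. norm q ^ Suc k) \<longlonglongrightarrow> 0"
    using norm_nome_less_1 by (intro LIMSEQ_Suc LIMSEQ_power_zero) auto
  then have "\<rho> \<longlonglongrightarrow> (norm a + 0) * (norm c + 0)"
    unfolding \<rho>_def by (intro tendsto_intros)
  moreover have "norm a * norm c < 1"
    using norm_a_mult_less_1[of c] assms by (simp add: norm_mult)
  ultimately have "summable (\<lambda>n. (real n + 1) ^ 2 * (\<Prod>k<n. \<rho> k))"
    by (intro summable_poly_times_prod_lessThan[of \<rho>]) (auto simp: \<rho>_def)
  then have majorant: "summable (\<lambda>n. 4 * K\<^sup>2 * ((real n + 1) ^ 2 * (\<Prod>k<n. \<rho> k)))"
    by (rule summable_mult)
  have row: "(\<Sum>r\<le>n. norm (bailey_term c n r)) \<le> 4 * K\<^sup>2 * ((real n + 1) ^ 2 * (\<Prod>k<n. \<rho> k))" for n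
  proof -
    have "(\<Sum>r\<le>n. norm (bailey_term c n r)) \<le> (\<Sum>r\<le>n. 4 * K\<^sup>2 * ((real n + 1) * (\<Prod>k<n. \<rho> k)))"
      unfolding \<rho>_def by (intro sum_mono norm_bailey_term_le K) auto
    then show ?thesis
      by (simp add: power2_eq_square algebra_simps)
  qed
  show ?thesis
    by (rule summable_comparison_test'[OF majorant]) (simp add: row sum_nonneg)
qed

lemma bailey_term_shift:
  "bailey_term c (m + r) r
     = hpoch a q r * hpoch c q r * bailey_alpha r / qpoch q q (2 * r + 1)
       * (hpoch a (q ^ Suc r) m * hpoch c (q ^ Suc r) m / (qpoch q q m * qpoch (q ^ Suc r * q ^ Suc r) q m))"
proof -
  define u where "u = q ^ Suc r"
  have uu: "u * u = q * q ^ (2 * r + 1)"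
    by (simp add: u_def power_add[symmetric] mult_2)
  have "hpoch x q (m + r) = hpoch x q r * hpoch x u m" for x
    using hpoch_add[of x q r m] by (simp add: u_def add.commute)
  moreover have "qpoch q q (m + r + r + 1) = qpoch q q (2 * r + 1) * qpoch (u * u) q m"
    using qpoch_add[of q q "2 * r + 1" m] by (simp add: uu add.commute add.left_commute mult_2)
  ultimately show ?thesis
    unfolding u_def[symmetric] by (simp add: bailey_term_def divide_inverse ac_simps)
qed

lemma bailey_term_column_sum:
  assumes "norm c < 1"
  shows "(\<Sum>m. bailey_term c (m + r) r)
           = qpoch_inf (q * a) q * qpoch_inf (q * c) q / (qpoch_inf q q * qpoch_inf (a * c) q) * rhs_term c r"
proof -
  define u where "u = q ^ Suc r"
  define W where "W = hpoch a q r * hpoch c q r * bailey_alpha r / qpoch q q (2 * r + 1)"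
  have uu: "u * u = q * q ^ (2 * r + 1)"
    by (simp add: u_def power_add[symmetric] mult_2)
  have norm_u: "norm u < 1"
    unfolding u_def norm_power by (rule norm_nome_power_Suc_less_1)
  have norm_uu: "norm (u * u) < 1"
    unfolding uu using norm_nome_power_Suc_less_1[of "2 * r + 1"] by (simp add: norm_mult norm_power)
  have "(\<lambda>m. hpoch a u m * hpoch c u m / (qpoch q q m * qpoch (u * u) q m))
          sums (qpoch_inf (a * u) q * qpoch_inf (u * c) q / (qpoch_inf (a * c) q * qpoch_inf (u * u) q))"
    using norm_a_less_1 assms norm_u norm_uu by (intro q_gauss_sums) auto
  then have "(\<Sum>m. bailey_term c (m + r) r)
               = W * (qpoch_inf (a * u) q * qpoch_inf (u * c) q / (qpoch_inf (a * c) q * qpoch_inf (u * u) q))"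
    unfolding bailey_term_shift[of c _ r, folded u_def W_def] by (intro sums_unique[symmetric] sums_mult)
  moreover have "qpoch_inf (q * a) q = qpoch (q * a) q r * qpoch_inf (a * u) q"
    using qpoch_inf_split[of "q * a" r] by (simp add: u_def mult_ac)
  moreover have "qpoch_inf (q * c) q = qpoch (q * c) q r * qpoch_inf (u * c) q"
    using qpoch_inf_split[of "q * c" r] by (simp add: u_def mult_ac)
  moreover have "qpoch_inf q q = qpoch q q (2 * r + 1) * qpoch_inf (u * u) q"
    unfolding uu by (rule qpoch_inf_split)
  moreover have "qpoch (q * a) q r \<noteq> 0" "qpoch (q * c) q r \<noteq> 0" "qpoch q q (2 * r + 1) \<noteq> 0"
    using norm_nome_mult_less_1[OF norm_a_less_1] norm_nome_mult_less_1[OF assms] norm_nome_less_1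
    by (simp_all add: qpoch_nonzero qpoch_nome_nonzero)
  moreover have "qpoch_inf (a * c) q \<noteq> 0" "qpoch_inf (u * u) q \<noteq> 0"
    using norm_a_mult_less_1[of c] assms norm_uu by (auto intro!: qpoch_inf_nonzero)
  ultimately show ?thesis
    by (simp add: W_def rhs_term_def field_simps)
qed

theorem phi_sum_expansion:
  assumes "norm c < 1"
  shows "phi_sum c
           = qpoch_inf (q * a) q * qpoch_inf (q * c) q / (qpoch_inf q q * qpoch_inf (a * c) q) * (\<Sum>r. rhs_term c r)"
proof -
  define K where "K = qpoch_inf (q * a) q * qpoch_inf (q * c) q / (qpoch_inf q q * qpoch_inf (a * c) q)"
  have "(\<lambda>r. \<Sum>m. bailey_term c (m + r) r) sums (\<Sum>n. \<Sum>r\<le>n. bailey_term c n r)"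
    by (rule sums_swap_triangle[OF summable_bailey_term_rows[OF assms]])
  moreover have "phi_term c = (\<lambda>n. \<Sum>r\<le>n. bailey_term c n r)"
    by (rule ext) (rule phi_term_eq_sum_bailey_term)
  ultimately have sums: "(\<lambda>r. K * rhs_term c r) sums phi_sum c"
    using assms by (simp add: bailey_term_column_sum K_def phi_sum_def)
  have "K \<noteq> 0"
    using norm_nome_mult_less_1[OF norm_a_less_1] norm_nome_mult_less_1[OF assms]
      norm_a_mult_less_1[of c] assms norm_nome_less_1
    unfolding K_def by (simp add: qpoch_inf_nonzero)
  then have "summable (rhs_term c)"
    using sums_summable[OF sums] by (simp add: summable_cmult_iff)
  have "phi_sum c = (\<Sum>r. K * rhs_term c r)"
    using sums by (simp add: sums_iff)
  also have "\<dots> = K * (\<Sum>r. rhs_term c r)"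
    by (rule suminf_mult) fact
  finally show ?thesis
    by (simp add: K_def)
qed

end

theorem theorem6p1:
  fixes q a c :: complex
  assumes "0 < norm q" "norm q < 1"
    and "norm a < 1" "norm c < 1"
    and "a \<noteq> 0" "c \<noteq> 0"
  shows "(\<Sum>n. qpoch (q / c) q n * c ^ n / (qpoch (q^2) (q^2) n * (1 + a * q ^ n))
              * q ^ (n * (n + 1) div 2))
       = qpoch_inf (q * a) q * qpoch_inf (q * c) q * qpoch_inf (- a * c) q
           / (qpoch_inf q q * qpoch_inf (a * c) q * qpoch_inf (- a) q)
         * (\<Sum>n. \<Sum>j\<in>{- int n..int n}.
              (-1) powi j * (1 - q ^ (2 * n + 1)) * q powi (int n ^ 2 - j ^ 2)
              * (qpoch (q / a) q n * qpoch (q / c) q n * (a * c) ^ n)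
              / (qpoch (q * a) q n * qpoch (q * c) q n))"
proof -
  interpret transformation q a
    using assms by unfold_locales auto
  have lhs: "(\<lambda>n. qpoch (q / c) q n * c ^ n / (qpoch (q^2) (q^2) n * (1 + a * q ^ n))
                  * q ^ (n * (n + 1) div 2)) = lhs_term c"
    using assms(6) by (auto simp: lhs_term_def hpoch_eq_qpoch)
  have "qpoch (q / a) q n * qpoch (q / c) q n * (a * c) ^ n = hpoch a q n * hpoch c q n" for n
    using assms(5,6) by (simp add: hpoch_eq_qpoch power_mult_distrib)
  then have rhs: "(\<lambda>n. \<Sum>j\<in>{- int n..int n}.
              (-1) powi j * (1 - q ^ (2 * n + 1)) * q powi (int n ^ 2 - j ^ 2)
              * (qpoch (q / a) q n * qpoch (q / c) q n * (a * c) ^ n)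
              / (qpoch (q * a) q n * qpoch (q * c) q n)) = rhs_term c"
    unfolding rhs_term_def bailey_alpha_def sum_divide_distrib[symmetric] sum_distrib_right[symmetric]
    by (simp add: mult_ac)
  have "qpoch_inf (- a) q \<noteq> 0"
    using assms(3) by (simp add: qpoch_inf_nonzero)
  then have "lhs_sum c = qpoch_inf (- (a * c)) q * phi_sum c / qpoch_inf (- a) q"
    using lhs_phi_relation[OF assms(4)] by (simp add: field_simps)
  then show ?thesis
    unfolding lhs rhs lhs_sum_def[symmetric] phi_sum_expansion[OF assms(4)]
    by (simp add: divide_inverse ac_simps)
qed

end
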